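(* Let $\mathcal D=(A,D)$ be a dependence alphabet and $\mathcal P=(Q,\Delta)$ a pushdown system satisfying (P1): $D(w)\subseteq D(a)$ for every $(p,a,w,q)\in\Delta$. Then the following are equivalent: (P2') for all $(p,a,v,q),(q,b,w,r)\in\Delta$ with $av\parallel bw$, there is a state $q'\in Q$ with $(p,b,w,q'),(q',a,v,r)\in\Delta$; (P2) for all $(p,a,v,q),(q,b,w,r)\in\Delta$ with $a\parallel b$, there is a state $q'\in Q$ with $(p,b,w,q'),(q',a,v,r)\in\Delta$.
   Context: A dependence alphabet is $\mathcal D=(A,D)$, $A$ finite, $D\subseteq A\times A$ reflexive and symmetric. For $a\in A$, $D(a)=\{c\mid(a,c)\in D\}$; for a word $w$, $D(w)$ is the union of $D(c)$ over the letters $c$ of $w$. Letters $x,y$ are independent if $(x,y)\notin D$; for words $u,v$ write $u\parallel v$ if every letter occurring in $u$ is independent of every letter occurring in $v$. A pushdown system is a pair $(Q,\Delta)$ with $Q$ a finite set of states and $\Delta\subseteq Q\times A\times A^*\times Q$ a finite set of transitions. *)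

theory Defs
  imports Main
begin

definition dep_alphabet :: "'a set \<Rightarrow> ('a \<times> 'a) set \<Rightarrow> bool" where
  "dep_alphabet A D \<longleftrightarrow> finite A \<and> D \<subseteq> A \<times> A \<and> refl_on A D \<and> sym D"

definition pushdown_system ::
  "'a set \<Rightarrow> 'q set \<Rightarrow> ('q \<times> 'a \<times> 'a list \<times> 'q) set \<Rightarrow> bool" where
  "pushdown_system A Q \<Delta> \<longleftrightarrow> finite Q \<and> finite \<Delta> \<and> \<Delta> \<subseteq> Q \<times> A \<times> lists A \<times> Q"

definition Dl :: "('a \<times> 'a) set \<Rightarrow> 'a \<Rightarrow> 'a set" where
  "Dl D a = {c. (a, c) \<in> D}"

definition Dw :: "('a \<times> 'a) set \<Rightarrow> 'a list \<Rightarrow> 'a set" where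
  "Dw D w = (\<Union>c\<in>set w. Dl D c)"

definition indep :: "('a \<times> 'a) set \<Rightarrow> 'a \<Rightarrow> 'a \<Rightarrow> bool" where
  "indep D x y \<longleftrightarrow> (x, y) \<notin> D"

definition indep_words :: "('a \<times> 'a) set \<Rightarrow> 'a list \<Rightarrow> 'a list \<Rightarrow> bool" where
  "indep_words D u v \<longleftrightarrow> (\<forall>x\<in>set u. \<forall>y\<in>set v. indep D x y)"

definition P1 :: "('a \<times> 'a) set \<Rightarrow> ('q \<times> 'a \<times> 'a list \<times> 'q) set \<Rightarrow> bool" where
  "P1 D \<Delta> \<longleftrightarrow> (\<forall>p a w q. (p, a, w, q) \<in> \<Delta> \<longrightarrow> Dw D w \<subseteq> Dl D a)"

definition P2' :: "('a \<times> 'a) set \<Rightarrow> 'q set \<Rightarrow> ('q \<times> 'a \<times> 'a list \<times> 'q) set \<Rightarrow> bool" where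
  "P2' D Q \<Delta> \<longleftrightarrow> (\<forall>p a v q b w r. (p, a, v, q) \<in> \<Delta> \<longrightarrow> (q, b, w, r) \<in> \<Delta> \<longrightarrow>
      indep_words D (a # v) (b # w) \<longrightarrow>
      (\<exists>q'\<in>Q. (p, b, w, q') \<in> \<Delta> \<and> (q', a, v, r) \<in> \<Delta>))"

definition P2 :: "('a \<times> 'a) set \<Rightarrow> 'q set \<Rightarrow> ('q \<times> 'a \<times> 'a list \<times> 'q) set \<Rightarrow> bool" where
  "P2 D Q \<Delta> \<longleftrightarrow> (\<forall>p a v q b w r. (p, a, v, q) \<in> \<Delta> \<longrightarrow> (q, b, w, r) \<in> \<Delta> \<longrightarrow>
      indep D a b \<longrightarrow>
      (\<exists>q'\<in>Q. (p, b, w, q') \<in> \<Delta> \<and> (q', a, v, r) \<in> \<Delta>))"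

end

theory Submission
  imports Defs
begin

text \<open>By (P1) every letter depending on some letter of \<open>a # v\<close> already depends on \<open>a\<close>.
  Hence, by symmetry of \<open>D\<close>, a dependence between \<open>a # v\<close> and \<open>b # w\<close> for two transitions
  would yield one between \<open>a\<close> and \<open>b\<close>; so \<open>a \<parallel> b\<close> already gives \<open>a v \<parallel> b w\<close>, and the
  two exchange properties coincide.\<close>

lemma Dw_Cons: "Dw D (a # v) = Dl D a \<union> Dw D v"
  by (simp add: Dw_def)

lemma Dw_Cons_subset_Dl:
  assumes "P1 D \<Delta>" and "(p, a, v, q) \<in> \<Delta>"
  shows "Dw D (a # v) \<subseteq> Dl D a"
  using assms by (auto simp: P1_def Dw_Cons)

lemma indep_words_iff_Dw: "indep_words D u v \<longleftrightarrow> Dw D u \<inter> set v = {}"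
  by (auto simp: indep_words_def indep_def Dw_def Dl_def)

lemma indep_words_Cons_if_indep:
  assumes "sym D"
    and a: "Dw D (a # v) \<subseteq> Dl D a" and b: "Dw D (b # w) \<subseteq> Dl D b"
    and "indep D a b"
  shows "indep_words D (a # v) (b # w)"
  unfolding indep_words_iff_Dw
proof (rule ccontr)
  assume "Dw D (a # v) \<inter> set (b # w) \<noteq> {}"
  then obtain y where "y \<in> set (b # w)" and "(a, y) \<in> D"
    using a by (auto simp: Dl_def)
  then have "a \<in> Dw D (b # w)"
    using \<open>sym D\<close> by (auto simp: Dw_def Dl_def dest: symD)
  then have "(b, a) \<in> D"
    using b by (auto simp: Dl_def)
  with \<open>sym D\<close> \<open>indep D a b\<close> show False
    by (auto simp: indep_def dest: symD)
qed

lemma P2'_imp_P2: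
  assumes "sym D" and "P1 D \<Delta>" and "P2' D Q \<Delta>"
  shows "P2 D Q \<Delta>"
  unfolding P2_def
proof (intro allI impI)
  fix p a v q b w r
  assume "(p, a, v, q) \<in> \<Delta>" and "(q, b, w, r) \<in> \<Delta>" and "indep D a b"
  moreover from this have "indep_words D (a # v) (b # w)"
    using assms(1,2) Dw_Cons_subset_Dl by (metis indep_words_Cons_if_indep)
  ultimately show "\<exists>q'\<in>Q. (p, b, w, q') \<in> \<Delta> \<and> (q', a, v, r) \<in> \<Delta>"
    using \<open>P2' D Q \<Delta>\<close> by (simp add: P2'_def)
qed

lemma P2_imp_P2': "P2 D Q \<Delta> \<Longrightarrow> P2' D Q \<Delta>"
  by (auto simp: P2_def P2'_def indep_words_def)

theorem lemma3p5:
  fixes A :: "'a set" and D :: "('a \<times> 'a) set"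
    and Q :: "'q set" and \<Delta> :: "('q \<times> 'a \<times> 'a list \<times> 'q) set"
  assumes "dep_alphabet A D"
    and "pushdown_system A Q \<Delta>"
    and "P1 D \<Delta>"
  shows "P2' D Q \<Delta> \<longleftrightarrow> P2 D Q \<Delta>"
proof
  have "sym D"
    using assms(1) by (simp add: dep_alphabet_def)
  then show "P2' D Q \<Delta> \<Longrightarrow> P2 D Q \<Delta>"
    using assms(3) by (rule P2'_imp_P2)
qed (rule P2_imp_P2')

end
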